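(* In the setting of the context, assume $G''(p_1)<0$, $G''(p_2)\ge0$ and $G''(p_1)G'(p_2)e^{-K_1}<G''(p_2)G'(p_1)e^{K_1}$, and that $\ell\in(0,\min\{L,1-L\})$ is chosen so that $$(L-\ell)G''(p_1)e^{-K_1}+\big[(1-L-\ell)G''(p_2)+2\ell K_2\big]e^{K_1}<0.$$ Then $I_{\theta_0+c}(1)<0<I_{\theta_0-c}(1)$ for all sufficiently small $c>0$.
   Context: Let $G\in\mathrm{C}^2(\mathbb{R})$ be coercive ($G(p)\to\infty$ as $p\to\pm\infty$), $p_1<p_2$ with $G'(p_1)<0<G'(p_2)$, $L=\frac{G'(p_2)}{G'(p_2)-G'(p_1)}$, $K_1=\max\{|G'(p)|:\,p\in[p_1,p_2]\}$, $K_2=\max\{|G''(p)|:\,p\in[p_1,p_2]\}$. Given $\ell$, let $f$ be a $1$-periodic function in $\mathrm{C}^1(\mathbb{R})$ with $f'$ Lipschitz, $p_1\le f\le p_2$, $f=p_1$ on $[0,L-\ell]$, $f=p_2$ on $[L,1-\ell]$, and $\int_0^1G'(f(x))dx=0$. Define the $1$-periodic Lipschitz potential $V(x)=-f'(x)-G(f(x))$ and $\theta_0=\int_0^1f(x)dx$. For each $\theta\in\mathbb{R}$, $f_\theta\in\mathrm{C}^1(\mathbb{R})$ denotes the unique $1$-periodic function with $\int_0^1f_\theta=\theta$ and $f_\theta'+G(f_\theta)+V=\overline{H}(\theta)$ on $\mathbb{R}$ for some (unique) constant $\overline{H}(\theta)$; and $I_\theta(1)=\int_0^1G'(f_\theta(x))dx$.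 *)

theory Defs
  imports "HOL-Analysis.Analysis"
begin

definition per_sol :: "(real \<Rightarrow> real) \<Rightarrow> (real \<Rightarrow> real) \<Rightarrow> real \<Rightarrow> (real \<Rightarrow> real) \<Rightarrow> bool" where
  "per_sol G V \<theta> g \<longleftrightarrow>
     (\<forall>x. g (x + 1) = g x) \<and>
     (\<exists>g'. (\<forall>x. (g has_real_derivative g' x) (at x)) \<and> continuous_on UNIV g' \<and>
           (\<exists>H. \<forall>x. g' x + G (g x) + V x = H)) \<and>
     integral {0..1} g = \<theta>"

text \<open>f_theta: the unique such solution (the context asserts existence and uniqueness).\<close>
definition f_theta :: "(real \<Rightarrow> real) \<Rightarrow> (real \<Rightarrow> real) \<Rightarrow> real \<Rightarrow> real \<Rightarrow> real" where
  "f_theta G V \<theta> = (THE g. per_sol G V \<theta> g)"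

definition I_one :: "(real \<Rightarrow> real) \<Rightarrow> (real \<Rightarrow> real) \<Rightarrow> (real \<Rightarrow> real) \<Rightarrow> real \<Rightarrow> real" where
  "I_one G G' V \<theta> = integral {0..1} (\<lambda>x. G' (f_theta G V \<theta> x))"

end

theory Submission
  imports Defs
begin

text \<open>Write \<open>f_theta (theta0 + c) = f + d\<close>. Then \<open>d\<close> is a periodic solution of
  \<open>d' + a d + N d = const\<close> with mean \<open>c\<close>, where \<open>a = G' o f\<close> has mean zero and \<open>N d\<close> is
  quadratically small. If \<open>Phi\<close> is a primitive of \<open>a\<close>, the linear equation \<open>d' + a d + q = H\<close>
  has periodic solutions for exactly one constant \<open>H\<close>, the one with mean zero is bounded by a
  multiple of \<open>sup |q|\<close>, and \<open>w = exp (- Phi) / (integral of exp (- Phi))\<close> solves the homogeneous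
  equation with mean one. A contraction argument on periodic bounded continuous functions yields
  \<open>d = c w + O(c^2)\<close>, hence \<open>I (theta0 + c) = c * integral (G'' o f) w + o(c)\<close>. This \<open>d\<close> is
  the right one because periodic solutions with a given mean are unique: at a maximum of the
  primitive of the difference of two solutions the difference vanishes, which forces equal
  constants, and then Gronwall's argument applies.

  The sign: \<open>exp (- Phi)\<close> lies between \<open>exp (- K1)\<close> and \<open>exp K1\<close>, and \<open>f\<close> equals \<open>p1\<close>
  on \<open>[0, L - l]\<close> and \<open>p2\<close> on \<open>[L, 1 - l]\<close>, so the hypothesis on \<open>l\<close> makes the derivative
  \<open>integral (G'' o f) w\<close> negative.\<close>

section \<open>Continuous periodic functions and their primitives\<close>

lemma continuous_on_UNIV_integrable:
  "continuous_on UNIV g \<Longrightarrow> (g :: real \<Rightarrow> real) integrable_on {a..b}"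
  by (rule integrable_continuous_interval) (rule continuous_on_subset[OF _ subset_UNIV])

lemma abs_divide_le_of_le:
  fixes A D X m :: real
  assumes "0 < m" "m \<le> D" "\<bar>A\<bar> \<le> X"
  shows "\<bar>A / D\<bar> \<le> X / m"
proof -
  have "\<bar>A\<bar> / D \<le> X / D" using assms by (intro divide_right_mono) auto
  also have "\<dots> \<le> X / m" using assms abs_ge_zero[of A] by (intro divide_left_mono) auto
  finally show ?thesis using assms by (simp add: abs_divide)
qed

lemma abs_le_SUP_Icc:
  fixes g :: "real \<Rightarrow> real"
  assumes "continuous_on UNIV g" "p \<in> {a..b}"
  shows "\<bar>g p\<bar> \<le> (SUP q \<in> {a..b}. \<bar>g q\<bar>)"
  using assms
  by (intro cSUP_upper bounded_imp_bdd_above compact_imp_bounded compact_continuous_image compact_Icc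
      continuous_on_rabs continuous_on_subset[OF assms(1) subset_UNIV])

lemma periodic_add_of_int:
  fixes q :: "real \<Rightarrow> 'a"
  assumes "\<And>x. q (x + 1) = q x"
  shows "q (x + of_int n) = q x"
proof (induction n rule: int_induct[where k = 0])
  case (step1 i)
  have "q (x + of_int (i + 1)) = q ((x + of_int i) + 1)" by (simp add: add.assoc)
  then show ?case using assms step1 by simp
next
  case (step2 i)
  have "q (x + of_int (i - 1)) = q ((x + of_int (i - 1)) + 1)" by (rule assms[symmetric])
  also have "\<dots> = q (x + of_int i)" by (simp add: algebra_simps)
  finally show ?case using step2 by simp
qed simp

lemma periodic_obtain_in_period:
  fixes q :: "real \<Rightarrow> 'a"
  assumes "\<And>x. q (x + 1) = q x"
  obtains z where "z \<in> {0..1}" "q y = q z"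
proof
  have "q y = q (frac y + of_int \<lfloor>y\<rfloor>)" by (simp add: frac_def)
  also have "\<dots> = q (frac y)" using periodic_add_of_int[of q] assms by blast
  finally show "q y = q (frac y)" .
  show "frac y \<in> {0..1}" using frac_lt_1[of y] by simp
qed

definition cont_periodic :: "(real \<Rightarrow> real) \<Rightarrow> bool" where
  "cont_periodic q \<longleftrightarrow> continuous_on UNIV q \<and> (\<forall>x. q (x + 1) = q x)"

lemma cont_periodicD:
  "cont_periodic q \<Longrightarrow> continuous_on UNIV q"
  "cont_periodic q \<Longrightarrow> q (x + 1) = q x"
  by (auto simp: cont_periodic_def)

lemma cont_periodic_integrable: "cont_periodic q \<Longrightarrow> q integrable_on {a..b}"
  by (rule continuous_on_UNIV_integrable[OF cont_periodicD(1)])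

lemma cont_periodic_const: "cont_periodic (\<lambda>x. c)"
  by (simp add: cont_periodic_def)

lemma cont_periodic_add: "cont_periodic p \<Longrightarrow> cont_periodic q \<Longrightarrow> cont_periodic (\<lambda>x. p x + q x)"
  by (auto simp: cont_periodic_def intro!: continuous_intros)

lemma cont_periodic_diff: "cont_periodic p \<Longrightarrow> cont_periodic q \<Longrightarrow> cont_periodic (\<lambda>x. p x - q x)"
  by (auto simp: cont_periodic_def intro!: continuous_intros)

lemma cont_periodic_mult: "cont_periodic p \<Longrightarrow> cont_periodic q \<Longrightarrow> cont_periodic (\<lambda>x. p x * q x)"
  by (auto simp: cont_periodic_def intro!: continuous_intros)

lemma cont_periodic_compose:
  "continuous_on UNIV h \<Longrightarrow> cont_periodic q \<Longrightarrow> cont_periodic (\<lambda>x. h (q x))"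
  unfolding cont_periodic_def by (auto intro: continuous_on_compose2)

lemmas cont_periodic_intros =
  cont_periodic_const cont_periodic_add cont_periodic_diff cont_periodic_mult

lemma cont_periodic_bounded:
  assumes "cont_periodic q"
  obtains B where "\<And>x. \<bar>q x\<bar> \<le> B"
proof -
  have "bounded (q ` {0..1})"
    using assms by (intro compact_imp_bounded compact_continuous_image compact_Icc
        continuous_on_subset[OF cont_periodicD(1)]) auto
  then obtain B where B: "\<forall>y \<in> q ` {0..1}. \<bar>y\<bar> \<le> B" unfolding bounded_iff by auto
  show ?thesis
  proof (rule that)
    fix x
    obtain z where "z \<in> {0..1}" "q x = q z"
      by (rule periodic_obtain_in_period[of q x, OF cont_periodicD(2)[OF assms]])
    then show "\<bar>q x\<bar> \<le> B" using B by simp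
  qed
qed

lemma cont_periodic_attains_max:
  assumes "cont_periodic q"
  obtains x0 where "\<And>y. q y \<le> q x0"
proof -
  have "\<exists>x0 \<in> {0..1}. \<forall>y \<in> {0..1}. q y \<le> q x0"
    using assms by (intro continuous_attains_sup continuous_on_subset[OF cont_periodicD(1)]) auto
  then obtain x0 where x0: "\<forall>y \<in> {0..1}. q y \<le> q x0" by blast
  show ?thesis
  proof (rule that)
    fix y
    obtain z where "z \<in> {0..1}" "q y = q z"
      by (rule periodic_obtain_in_period[of q y, OF cont_periodicD(2)[OF assms]])
    then show "q y \<le> q x0" using x0 by simp
  qed
qed

text \<open>One of the two intervals is empty or a point, so this is the oriented integral of \<open>q\<close>
  from \<open>0\<close> to \<open>x\<close>.\<close>
definition primitive :: "(real \<Rightarrow> real) \<Rightarrow> real \<Rightarrow> real" where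
  "primitive q x = integral {0..x} q - integral {x..0} q"

lemma primitive_nonneg: "0 \<le> x \<Longrightarrow> primitive q x = integral {0..x} q"
  by (cases "x = 0") (auto simp: primitive_def)

lemma primitive_eq_integral_from:
  assumes "continuous_on UNIV q" "n \<le> y" "n \<le> 0"
  shows "primitive q y = integral {n..y} q - integral {n..0} q"
proof (cases "0 \<le> y")
  case True
  have "integral {n..0} q + integral {0..y} q = integral {n..y} q"
    using assms True by (intro Henstock_Kurzweil_Integration.integral_combine continuous_on_UNIV_integrable) auto
  then show ?thesis using True by (simp add: primitive_nonneg)
next
  case False
  have "integral {n..y} q + integral {y..0} q = integral {n..0} q"
    using assms False by (intro Henstock_Kurzweil_Integration.integral_combine continuous_on_UNIV_integrable) auto
  then show ?thesis using False by (simp add: primitive_def)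
qed

lemma primitive_has_real_derivative:
  assumes "continuous_on UNIV q"
  shows "(primitive q has_real_derivative q x) (at x)"
proof -
  define n where "n = - \<bar>x\<bar> - 1"
  have x: "x \<in> {n<..<-n}" unfolding n_def by (simp add: abs_if)
  have "((\<lambda>y. integral {n..y} q) has_real_derivative q x) (at x within {n..-n})"
    using x by (intro integral_has_real_derivative continuous_on_subset[OF assms]) auto
  then have "((\<lambda>y. integral {n..y} q) has_real_derivative q x) (at x)"
    using x by (simp add: at_within_Icc_at)
  then have "((\<lambda>y. integral {n..y} q - integral {n..0} q) has_real_derivative q x) (at x)"
    using DERIV_diff[OF _ DERIV_const[of "integral {n..0} q"]] by simp
  then show ?thesis
  proof (rule has_field_derivative_transform_within_open[OF _ open_greaterThanLessThan x])
    fix y assume "y \<in> {n<..<-n}"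
    moreover have "n \<le> 0" unfolding n_def by simp
    ultimately show "integral {n..y} q - integral {n..0} q = primitive q y"
      using primitive_eq_integral_from[OF assms, of n y] by simp
  qed
qed

lemma primitive_diff:
  assumes "continuous_on UNIV p" "continuous_on UNIV q"
  shows "primitive (\<lambda>s. p s - q s) x = primitive p x - primitive q x"
  using assms by (simp add: primitive_def integral_diff continuous_on_UNIV_integrable)

lemma primitive_add_one:
  assumes "cont_periodic q"
  shows "primitive q (x + 1) = primitive q x + integral {0..1} q"
proof -
  have "((\<lambda>y. primitive q (y + 1) - primitive q y) has_real_derivative 0) (at y)" for y
  proof -
    have "((\<lambda>y. primitive q (y + 1)) has_real_derivative q (y + 1)) (at y)"
      using DERIV_shift primitive_has_real_derivative[OF cont_periodicD(1)[OF assms]] by blast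
    then have "((\<lambda>y. primitive q (y + 1) - primitive q y) has_real_derivative q (y + 1) - q y) (at y)"
      by (intro DERIV_diff primitive_has_real_derivative cont_periodicD(1)[OF assms])
    then show ?thesis using cont_periodicD(2)[OF assms, of y] by simp
  qed
  from DERIV_isconst_all[OF allI[OF this], of x 0] show ?thesis by (simp add: primitive_nonneg)
qed

lemma cont_periodic_primitive:
  assumes "cont_periodic q" "integral {0..1} q = 0"
  shows "cont_periodic (primitive q)"
proof -
  have "continuous_on UNIV (primitive q)"
    using primitive_has_real_derivative[OF cont_periodicD(1)[OF assms(1)]] by (rule DERIV_continuous_on)
  then show ?thesis unfolding cont_periodic_def using primitive_add_one[OF assms(1)] assms(2) by simp
qed

lemma abs_primitive_le:
  assumes "continuous_on UNIV q" "\<And>s. s \<in> {0..1} \<Longrightarrow> \<bar>q s\<bar> \<le> B" "x \<in> {0..1}"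
  shows "\<bar>primitive q x\<bar> \<le> B"
proof -
  have "\<bar>integral {0..x} q\<bar> \<le> B * (x - 0)"
    using assms by (intro integral_bound[where f = q, simplified] continuous_on_subset[OF assms(1)]) auto
  also have "\<dots> \<le> B" using assms(2)[of 0] assms(3) by (simp add: mult_left_le)
  finally show ?thesis using assms(3) by (simp add: primitive_nonneg)
qed

section \<open>Uniqueness of periodic solutions with given mean\<close>

lemma mean_zero_primitive_max:
  assumes "cont_periodic D" "integral {0..1} D = 0"
  obtains x0 where "D x0 = 0" "\<And>y. primitive D y \<le> primitive D x0"
proof -
  obtain x0 where max: "\<And>y. primitive D y \<le> primitive D x0"
    using cont_periodic_attains_max[OF cont_periodic_primitive[OF assms]] by blast
  have "D x0 = 0"
    using DERIV_local_max[OF primitive_has_real_derivative[OF cont_periodicD(1)[OF assms(1)]] zero_less_one]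
      max by blast
  then show ?thesis using max that by blast
qed

lemma periodic_sol_const_le:
  fixes g1 g2 g1' g2' G V :: "real \<Rightarrow> real"
  assumes d1: "\<And>x. (g1 has_real_derivative g1' x) (at x)"
    and d2: "\<And>x. (g2 has_real_derivative g2' x) (at x)"
    and p1: "\<And>x. g1 (x + 1) = g1 x" and p2: "\<And>x. g2 (x + 1) = g2 x"
    and mean: "integral {0..1} g1 = integral {0..1} g2"
    and e1: "\<And>x. g1' x + G (g1 x) + V x = H1"
    and e2: "\<And>x. g2' x + G (g2 x) + V x = H2"
  shows "H1 \<le> H2"
proof (rule ccontr)
  assume "\<not> H1 \<le> H2"
  define D where "D x = g1 x - g2 x" for x
  have c1: "continuous_on UNIV g1" and c2: "continuous_on UNIV g2"
    using d1 d2 by (blast intro: DERIV_continuous_on)+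
  have D_deriv: "(D has_real_derivative g1' x - g2' x) (at x)" for x
    unfolding D_def[abs_def] by (rule DERIV_diff[OF d1 d2])
  have "cont_periodic D"
    unfolding cont_periodic_def D_def using p1 p2 by (simp add: continuous_on_diff[OF c1 c2])
  moreover have "integral {0..1} D = 0"
    unfolding D_def using mean by (simp add: integral_diff continuous_on_UNIV_integrable c1 c2)
  ultimately obtain x0 where D0: "D x0 = 0" and max: "\<And>y. primitive D y \<le> primitive D x0"
    using mean_zero_primitive_max by blast
  \<comment> \<open>At a maximum of the primitive of \<open>g1 - g2\<close> the difference vanishes,
    so there \<open>(g1 - g2)' = H1 - H2 > 0\<close> and the primitive would still increase.\<close>
  have "0 < g1' x0 - g2' x0" using e1[of x0] e2[of x0] D0 \<open>\<not> H1 \<le> H2\<close> unfolding D_def by simp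
  then obtain \<delta> where "\<delta> > 0" and pos: "\<And>h. 0 < h \<Longrightarrow> h < \<delta> \<Longrightarrow> D x0 < D (x0 + h)"
    using DERIV_pos_inc_right[OF D_deriv] by blast
  have "primitive D x0 < primitive D (x0 + \<delta>)"
  proof (rule DERIV_pos_imp_increasing_open[of x0 "x0 + \<delta>" "primitive D"])
    show "x0 < x0 + \<delta>" using \<open>\<delta> > 0\<close> by simp
    show "\<exists>y. (primitive D has_real_derivative y) (at x) \<and> 0 < y" if "x0 < x" "x < x0 + \<delta>" for x
      using primitive_has_real_derivative[OF cont_periodicD(1)[OF \<open>cont_periodic D\<close>]]
        pos[of "x - x0"] that D0 by auto
    show "continuous_on {x0..x0 + \<delta>} (primitive D)"
      using cont_periodicD(1)[OF cont_periodic_primitive[OF \<open>cont_periodic D\<close> \<open>integral {0..1} D = 0\<close>]]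
      by (rule continuous_on_subset) simp
  qed
  then show False using max[of "x0 + \<delta>"] by simp
qed

lemma vanishes_if_abs_deriv_le:
  fixes D D' :: "real \<Rightarrow> real"
  assumes D_deriv: "\<And>x. (D has_real_derivative D' x) (at x)"
    and abs_deriv_le: "\<And>x. \<bar>D' x\<bar> \<le> M * \<bar>D x\<bar>"
    and "D x0 = 0"
  shows "D x = 0"
proof -
  define E where "E k x = D x * D x * exp (k * x)" for k x
  have E_deriv: "(E k has_real_derivative exp (k * x) * (2 * (D x * D' x) + k * (D x * D x))) (at x)" for k x
    unfolding E_def[abs_def]
    using DERIV_mult[OF DERIV_mult[OF D_deriv D_deriv] DERIV_chain2[OF DERIV_exp DERIV_cmult[OF DERIV_ident]]]
    by (rule DERIV_cong) (simp add: algebra_simps)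
  have key: "\<bar>D x * D' x\<bar> \<le> M * (D x * D x)" for x
    using mult_left_mono[OF abs_deriv_le[of x] abs_ge_zero[of "D x"]]
    by (simp add: abs_mult algebra_simps)
  \<comment> \<open>\<open>D\<^sup>2 exp (-2 M x)\<close> is nonincreasing and \<open>D\<^sup>2 exp (2 M x)\<close> nondecreasing.\<close>
  have right: "E (- 2 * M) x \<le> E (- 2 * M) x0" if "x0 \<le> x"
  proof (rule DERIV_nonpos_imp_nonincreasing[OF that])
    fix t
    have "exp (- 2 * M * t) * (2 * (D t * D' t) + - 2 * M * (D t * D t)) \<le> 0"
      using key[of t] by (intro mult_nonneg_nonpos) (auto simp: abs_le_iff)
    then show "\<exists>y. (E (- 2 * M) has_real_derivative y) (at t) \<and> y \<le> 0" using E_deriv by blast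
  qed
  have left: "E (2 * M) x \<le> E (2 * M) x0" if "x \<le> x0"
  proof (rule DERIV_nonneg_imp_nondecreasing[OF that])
    fix t
    have "0 \<le> exp (2 * M * t) * (2 * (D t * D' t) + 2 * M * (D t * D t))"
      using key[of t] by (intro mult_nonneg_nonneg) (auto simp: abs_le_iff)
    then show "\<exists>y. (E (2 * M) has_real_derivative y) (at t) \<and> 0 \<le> y" using E_deriv by blast
  qed
  have "E k x \<le> 0 \<Longrightarrow> D x * D x \<le> 0" for k
    unfolding E_def by (auto simp: mult_le_0_iff)
  then have "D x * D x \<le> 0"
    using right left \<open>D x0 = 0\<close> unfolding E_def[of _ x0] by (cases "x0 \<le> x") auto
  then show ?thesis by (metis antisym mult_eq_0_iff zero_le_square)
qed

lemma C1_lipschitz_on_Icc: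
  fixes G G' :: "real \<Rightarrow> real"
  assumes G_deriv: "\<And>x. (G has_real_derivative G' x) (at x)" and G'_cont: "continuous_on UNIV G'"
  obtains M where "\<And>u v. u \<in> {a..b} \<Longrightarrow> v \<in> {a..b} \<Longrightarrow> \<bar>G u - G v\<bar> \<le> M * \<bar>u - v\<bar>"
proof -
  have "bounded (G' ` {a..b})"
    by (intro compact_imp_bounded compact_continuous_image continuous_on_subset[OF G'_cont]) auto
  then obtain M where M: "\<forall>p \<in> {a..b}. \<bar>G' p\<bar> \<le> M" unfolding bounded_iff by auto
  show ?thesis
  proof (rule that)
    fix u v assume "u \<in> {a..b}" "v \<in> {a..b}"
    then have "norm (G u - G v) \<le> M * norm (u - v)"
      using M by (intro field_differentiable_bound[of "{a..b}" G G' M] has_field_derivative_at_within[OF G_deriv]) auto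
    then show "\<bar>G u - G v\<bar> \<le> M * \<bar>u - v\<bar>" by simp
  qed
qed

lemma per_sol_unique:
  fixes G G' V g1 g2 :: "real \<Rightarrow> real"
  assumes G_deriv: "\<And>x. (G has_real_derivative G' x) (at x)" and G'_cont: "continuous_on UNIV G'"
    and "per_sol G V \<theta> g1" "per_sol G V \<theta> g2"
  shows "g1 = g2"
proof -
  obtain g1' H1 where d1: "\<And>x. (g1 has_real_derivative g1' x) (at x)"
    and e1: "\<And>x. g1' x + G (g1 x) + V x = H1"
    and p1: "\<And>x. g1 (x + 1) = g1 x" and m1: "integral {0..1} g1 = \<theta>"
    using assms(3) unfolding per_sol_def by blast
  obtain g2' H2 where d2: "\<And>x. (g2 has_real_derivative g2' x) (at x)"
    and e2: "\<And>x. g2' x + G (g2 x) + V x = H2"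
    and p2: "\<And>x. g2 (x + 1) = g2 x" and m2: "integral {0..1} g2 = \<theta>"
    using assms(4) unfolding per_sol_def by blast
  have "H1 = H2"
    using periodic_sol_const_le[OF d1 d2 p1 p2 _ e1 e2] periodic_sol_const_le[OF d2 d1 p2 p1 _ e2 e1] m1 m2
    by fastforce
  have g1: "cont_periodic g1" and g2: "cont_periodic g2"
    unfolding cont_periodic_def using d1 d2 p1 p2 by (blast intro: DERIV_continuous_on)+
  obtain B1 B2 where B1: "\<And>x. \<bar>g1 x\<bar> \<le> B1" and B2: "\<And>x. \<bar>g2 x\<bar> \<le> B2"
    using cont_periodic_bounded[OF g1] cont_periodic_bounded[OF g2] by metis
  obtain M where G_lip: "\<And>u v. u \<in> {-max B1 B2..max B1 B2} \<Longrightarrow> v \<in> {-max B1 B2..max B1 B2} \<Longrightarrow>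
      \<bar>G u - G v\<bar> \<le> M * \<bar>u - v\<bar>"
    using C1_lipschitz_on_Icc[OF G_deriv G'_cont] by blast
  have deriv_le: "\<bar>g1' x - g2' x\<bar> \<le> M * \<bar>g1 x - g2 x\<bar>" for x
  proof -
    have "g1 x \<in> {-max B1 B2..max B1 B2}" "g2 x \<in> {-max B1 B2..max B1 B2}"
      using B1[of x] B2[of x] by (auto simp: abs_le_iff)
    moreover have "g1' x - g2' x = - (G (g1 x) - G (g2 x))" using e1[of x] e2[of x] \<open>H1 = H2\<close> by linarith
    ultimately show ?thesis using G_lip[of "g1 x" "g2 x"] by (simp only: abs_minus_cancel)
  qed
  have "integral {0..1} (\<lambda>x. g1 x - g2 x) = 0"
    using m1 m2 g1 g2 by (simp add: integral_diff cont_periodic_integrable)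
  then obtain x0 where x0: "g1 x0 - g2 x0 = 0"
    using mean_zero_primitive_max[OF cont_periodic_diff[OF g1 g2]] by blast
  have "g1 x - g2 x = 0" for x
    by (rule vanishes_if_abs_deriv_le[where D = "\<lambda>x. g1 x - g2 x" and D' = "\<lambda>x. g1' x - g2' x",
          OF DERIV_diff[OF d1 d2] deriv_le x0])
  then show ?thesis by auto
qed

lemma f_theta_eqI:
  assumes "\<And>x. (G has_real_derivative G' x) (at x)" "continuous_on UNIV G'" "per_sol G V \<theta> g"
  shows "f_theta G V \<theta> = g"
  unfolding f_theta_def using assms per_sol_unique by (intro the_equality) blast+

section \<open>The linearised equation\<close>

locale zero_mean_drift =
  fixes a :: "real \<Rightarrow> real" and K :: real
  assumes cont_periodic_a: "cont_periodic a"
    and mean_a: "integral {0..1} a = 0"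
    and abs_a_le: "\<And>x. \<bar>a x\<bar> \<le> K"
begin

definition \<Phi> :: "real \<Rightarrow> real" where
  "\<Phi> = primitive a"

lemma \<Phi>_deriv: "(\<Phi> has_real_derivative a x) (at x)"
  unfolding \<Phi>_def by (rule primitive_has_real_derivative[OF cont_periodicD(1)[OF cont_periodic_a]])

lemma cont_periodic_\<Phi>: "cont_periodic \<Phi>"
  unfolding \<Phi>_def by (rule cont_periodic_primitive[OF cont_periodic_a mean_a])

lemma abs_\<Phi>_le: "\<bar>\<Phi> x\<bar> \<le> K"
proof -
  obtain z where "z \<in> {0..1}" "\<Phi> x = \<Phi> z"
    by (rule periodic_obtain_in_period[of \<Phi> x, OF cont_periodicD(2)[OF cont_periodic_\<Phi>]])
  then show ?thesis
    unfolding \<Phi>_def using abs_primitive_le[OF cont_periodicD(1)[OF cont_periodic_a] abs_a_le] by simp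
qed

lemma exp_\<Phi>_bounds:
  "exp (- K) \<le> exp (\<Phi> x)" "exp (\<Phi> x) \<le> exp K" "exp (- K) \<le> exp (- \<Phi> x)" "exp (- \<Phi> x) \<le> exp K"
  using abs_\<Phi>_le[of x] by (auto simp: abs_le_iff)

lemma cont_periodic_exp_\<Phi>: "cont_periodic (\<lambda>x. exp (\<Phi> x))" "cont_periodic (\<lambda>x. exp (- \<Phi> x))"
  by (intro cont_periodic_compose[OF _ cont_periodic_\<Phi>] continuous_intros)+

lemma integral_exp_\<Phi>_ge:
  "exp (- K) \<le> integral {0..1} (\<lambda>x. exp (\<Phi> x))"
  "exp (- K) \<le> integral {0..1} (\<lambda>x. exp (- \<Phi> x))"
proof -
  have "integral {0..1} (\<lambda>x::real. exp (- K)) \<le> integral {0..1} (\<lambda>x. exp (\<Phi> x))"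
    by (rule integral_le[OF integrable_const_ivl cont_periodic_integrable[OF cont_periodic_exp_\<Phi>(1)]])
      (rule exp_\<Phi>_bounds(1))
  moreover have "integral {0..1} (\<lambda>x::real. exp (- K)) \<le> integral {0..1} (\<lambda>x. exp (- \<Phi> x))"
    by (rule integral_le[OF integrable_const_ivl cont_periodic_integrable[OF cont_periodic_exp_\<Phi>(2)]])
      (rule exp_\<Phi>_bounds(3))
  ultimately show "exp (- K) \<le> integral {0..1} (\<lambda>x. exp (\<Phi> x))"
    "exp (- K) \<le> integral {0..1} (\<lambda>x. exp (- \<Phi> x))" by simp_all
qed

lemma exp_K_div_exp_minus_K: "exp K / exp (- K) = exp (2 * K)"
  by (simp add: exp_diff[symmetric])

definition w :: "real \<Rightarrow> real" where
  "w x = exp (- \<Phi> x) / integral {0..1} (\<lambda>s. exp (- \<Phi> s))"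

lemma cont_periodic_w: "cont_periodic w"
  unfolding w_def[abs_def] divide_inverse by (intro cont_periodic_intros cont_periodic_exp_\<Phi>)

lemma w_deriv: "(w has_real_derivative - a x * w x) (at x)"
proof -
  have "((\<lambda>x. exp (- \<Phi> x)) has_real_derivative exp (- \<Phi> x) * - a x) (at x)"
    by (rule DERIV_chain2[OF DERIV_exp DERIV_minus[OF \<Phi>_deriv]])
  from DERIV_cdivide[OF this] show ?thesis unfolding w_def[abs_def] by (simp add: field_simps)
qed

lemma integral_exp_\<Phi>_pos:
  "0 < integral {0..1} (\<lambda>x. exp (\<Phi> x))" "0 < integral {0..1} (\<lambda>x. exp (- \<Phi> x))"
  using integral_exp_\<Phi>_ge exp_gt_zero[of "- K"] by linarith+

lemma integral_w: "integral {0..1} w = 1"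
  unfolding w_def using integral_exp_\<Phi>_pos(2) by simp

lemma abs_w_le: "\<bar>w x\<bar> \<le> exp (2 * K)"
  unfolding w_def exp_K_div_exp_minus_K[symmetric]
  using exp_\<Phi>_bounds(4)[of x] integral_exp_\<Phi>_ge(2) by (intro abs_divide_le_of_le) auto

lemma integral_mult_w_neg:
  "integral {0..1} (\<lambda>x. g x * exp (- \<Phi> x)) < 0 \<Longrightarrow> integral {0..1} (\<lambda>x. g x * w x) < 0"
  unfolding w_def times_divide_eq_right integral_divide using integral_exp_\<Phi>_pos(2)
  by (simp add: divide_neg_pos)

text \<open>\<open>lin_sol q\<close> is the periodic solution with mean zero of \<open>d' + a d + q = Hlin q\<close>.\<close>

definition Hlin :: "(real \<Rightarrow> real) \<Rightarrow> real" where
  "Hlin q = integral {0..1} (\<lambda>s. q s * exp (\<Phi> s)) / integral {0..1} (\<lambda>s. exp (\<Phi> s))"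

definition raw_lin_sol :: "(real \<Rightarrow> real) \<Rightarrow> real \<Rightarrow> real" where
  "raw_lin_sol q x = exp (- \<Phi> x) * primitive (\<lambda>s. (Hlin q - q s) * exp (\<Phi> s)) x"

definition lin_sol :: "(real \<Rightarrow> real) \<Rightarrow> real \<Rightarrow> real" where
  "lin_sol q x = raw_lin_sol q x - integral {0..1} (raw_lin_sol q) * w x"

lemma cont_periodic_Hlin_integrand:
  "cont_periodic q \<Longrightarrow> cont_periodic (\<lambda>s. (Hlin q - q s) * exp (\<Phi> s))"
  by (intro cont_periodic_intros cont_periodic_exp_\<Phi>)

lemma integral_Hlin_integrand:
  assumes "cont_periodic q"
  shows "integral {0..1} (\<lambda>s. (Hlin q - q s) * exp (\<Phi> s)) = 0"
proof -
  have "integral {0..1} (\<lambda>s. (Hlin q - q s) * exp (\<Phi> s))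
      = Hlin q * integral {0..1} (\<lambda>s. exp (\<Phi> s)) - integral {0..1} (\<lambda>s. q s * exp (\<Phi> s))"
    using assms cont_periodic_exp_\<Phi>(1)
    by (simp add: algebra_simps integral_diff cont_periodic_integrable cont_periodic_intros)
  then show ?thesis unfolding Hlin_def using integral_exp_\<Phi>_pos(1) by simp
qed

lemma cont_periodic_raw_lin_sol: "cont_periodic q \<Longrightarrow> cont_periodic (raw_lin_sol q)"
  unfolding raw_lin_sol_def[abs_def]
  by (intro cont_periodic_intros cont_periodic_exp_\<Phi> cont_periodic_primitive
      cont_periodic_Hlin_integrand integral_Hlin_integrand)

lemma raw_lin_sol_deriv:
  assumes "cont_periodic q"
  shows "(raw_lin_sol q has_real_derivative - a x * raw_lin_sol q x + (Hlin q - q x)) (at x)"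
proof -
  have "((\<lambda>x. exp (- \<Phi> x)) has_real_derivative exp (- \<Phi> x) * - a x) (at x)"
    by (rule DERIV_chain2[OF DERIV_exp DERIV_minus[OF \<Phi>_deriv]])
  from DERIV_mult[OF this primitive_has_real_derivative[OF
        cont_periodicD(1)[OF cont_periodic_Hlin_integrand[OF assms]]]]
  show ?thesis unfolding raw_lin_sol_def[abs_def]
    by (rule DERIV_cong) (simp add: algebra_simps exp_minus field_simps)
qed

lemma cont_periodic_lin_sol: "cont_periodic q \<Longrightarrow> cont_periodic (lin_sol q)"
  unfolding lin_sol_def[abs_def] by (intro cont_periodic_intros cont_periodic_raw_lin_sol cont_periodic_w)

lemma lin_sol_deriv:
  assumes "cont_periodic q"
  shows "(lin_sol q has_real_derivative - a x * lin_sol q x + (Hlin q - q x)) (at x)"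
  using DERIV_diff[OF raw_lin_sol_deriv[OF assms] DERIV_cmult[OF w_deriv, of "integral {0..1} (raw_lin_sol q)"]]
  unfolding lin_sol_def[abs_def] by (rule DERIV_cong) (simp add: algebra_simps)

lemma integral_lin_sol: "cont_periodic q \<Longrightarrow> integral {0..1} (lin_sol q) = 0"
  unfolding lin_sol_def[abs_def] using integral_w
  by (simp add: integral_diff cont_periodic_integrable cont_periodic_raw_lin_sol cont_periodic_w cont_periodic_intros)

definition C_lin :: real where
  "C_lin = exp (2 * K) * (1 + exp (2 * K))\<^sup>2"

lemma abs_Hlin_le:
  assumes "cont_periodic q" "\<And>s. \<bar>q s\<bar> \<le> \<beta>"
  shows "\<bar>Hlin q\<bar> \<le> \<beta> * exp (2 * K)"
proof -
  have "0 \<le> \<beta>" using assms(2)[of 0] by linarith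
  then have "\<bar>q s * exp (\<Phi> s)\<bar> \<le> \<beta> * exp K" for s
    unfolding abs_mult using assms(2)[of s] exp_\<Phi>_bounds(2)[of s] by (intro mult_mono) auto
  then have "\<bar>integral {0..1} (\<lambda>s. q s * exp (\<Phi> s))\<bar> \<le> \<beta> * exp K"
    using integral_bound[of 0 1 "\<lambda>s. q s * exp (\<Phi> s)" "\<beta> * exp K"] assms(1)
    by (simp add: continuous_on_subset[OF cont_periodicD(1)] cont_periodic_intros cont_periodic_exp_\<Phi>)
  then have "\<bar>Hlin q\<bar> \<le> \<beta> * exp K / exp (- K)"
    unfolding Hlin_def using integral_exp_\<Phi>_ge(1) by (intro abs_divide_le_of_le) auto
  also have "\<dots> = \<beta> * exp (2 * K)"
    by (metis exp_K_div_exp_minus_K times_divide_eq_right)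
  finally show ?thesis .
qed

lemma abs_raw_lin_sol_le:
  assumes "cont_periodic q" "\<And>s. \<bar>q s\<bar> \<le> \<beta>"
  shows "\<bar>raw_lin_sol q x\<bar> \<le> \<beta> * exp (2 * K) * (1 + exp (2 * K))"
proof -
  have \<beta>: "0 \<le> \<beta>" using assms(2)[of 0] by linarith
  have "\<bar>(Hlin q - q s) * exp (\<Phi> s)\<bar> \<le> (\<beta> * exp (2 * K) + \<beta>) * exp K" for s
    unfolding abs_mult using abs_Hlin_le[OF assms] assms(2)[of s] exp_\<Phi>_bounds(2)[of s] \<beta>
    by (intro mult_mono) auto
  then have "\<bar>primitive (\<lambda>s. (Hlin q - q s) * exp (\<Phi> s)) z\<bar> \<le> (\<beta> * exp (2 * K) + \<beta>) * exp K"
    if "z \<in> {0..1}" for z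
    using that by (intro abs_primitive_le cont_periodicD(1)[OF cont_periodic_Hlin_integrand[OF assms(1)]])
  then have "\<bar>raw_lin_sol q z\<bar> \<le> exp K * ((\<beta> * exp (2 * K) + \<beta>) * exp K)" if "z \<in> {0..1}" for z
    unfolding raw_lin_sol_def abs_mult using exp_\<Phi>_bounds(4)[of z] that by (intro mult_mono) auto
  moreover obtain z where "z \<in> {0..1}" "raw_lin_sol q x = raw_lin_sol q z"
    by (rule periodic_obtain_in_period[of "raw_lin_sol q" x,
          OF cont_periodicD(2)[OF cont_periodic_raw_lin_sol[OF assms(1)]]])
  moreover have "exp (2 * K) = exp K * exp K" by (subst mult_2) (rule exp_add)
  ultimately show ?thesis by (simp add: algebra_simps)
qed

lemma abs_lin_sol_le:
  assumes "cont_periodic q" "\<And>s. \<bar>q s\<bar> \<le> \<beta>"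
  shows "\<bar>lin_sol q x\<bar> \<le> C_lin * \<beta>"
proof -
  define P where "P = \<beta> * exp (2 * K) * (1 + exp (2 * K))"
  have "\<bar>integral {0..1} (raw_lin_sol q)\<bar> \<le> P"
    using integral_bound[of 0 1 "raw_lin_sol q" P] abs_raw_lin_sol_le[OF assms] unfolding P_def
    by (simp add: continuous_on_subset[OF cont_periodicD(1)[OF cont_periodic_raw_lin_sol[OF assms(1)]]])
  then have "\<bar>integral {0..1} (raw_lin_sol q) * w x\<bar> \<le> P * exp (2 * K)"
    unfolding abs_mult using abs_w_le[of x] by (intro mult_mono) auto
  then have "\<bar>lin_sol q x\<bar> \<le> P + P * exp (2 * K)"
    unfolding lin_sol_def using abs_raw_lin_sol_le[OF assms, of x] abs_triangle_ineq4[of "raw_lin_sol q x"]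
    unfolding P_def by linarith
  then show ?thesis unfolding C_lin_def P_def by (simp add: power2_eq_square algebra_simps)
qed

lemma Hlin_diff:
  assumes "cont_periodic p" "cont_periodic q"
  shows "Hlin (\<lambda>s. p s - q s) = Hlin p - Hlin q"
  unfolding Hlin_def using assms
  by (simp add: left_diff_distrib integral_diff cont_periodic_integrable cont_periodic_intros
      cont_periodic_exp_\<Phi> diff_divide_distrib)

lemma lin_sol_diff:
  assumes "cont_periodic p" "cont_periodic q"
  shows "lin_sol (\<lambda>s. p s - q s) x = lin_sol p x - lin_sol q x"
proof -
  have "(\<lambda>s. (Hlin (\<lambda>s. p s - q s) - (p s - q s)) * exp (\<Phi> s))
      = (\<lambda>s. (Hlin p - p s) * exp (\<Phi> s) - (Hlin q - q s) * exp (\<Phi> s))"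
    unfolding Hlin_diff[OF assms] by (simp add: algebra_simps)
  then have raw: "raw_lin_sol (\<lambda>s. p s - q s) = (\<lambda>x. raw_lin_sol p x - raw_lin_sol q x)"
    unfolding raw_lin_sol_def using assms
    by (simp add: primitive_diff cont_periodicD(1) cont_periodic_Hlin_integrand right_diff_distrib)
  show ?thesis
    unfolding lin_sol_def raw using assms
    by (simp add: integral_diff cont_periodic_integrable cont_periodic_raw_lin_sol algebra_simps)
qed

end

section \<open>Periodic solutions near \<open>f\<close>\<close>

lemma DERIV_add_const_arg:
  "(g has_real_derivative D) (at (p + t)) \<Longrightarrow> ((\<lambda>t. g (p + t)) has_real_derivative D) (at t)"
  using DERIV_shift[of g D t p] by (simp add: add.commute)

lemma deriv_remainder_lipschitz:
  fixes G G' G'' :: "real \<Rightarrow> real"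
  assumes G_deriv: "\<And>x. (G has_real_derivative G' x) (at x)"
    and G'_deriv: "\<And>x. (G' has_real_derivative G'' x) (at x)"
    and G''_le: "\<And>t. \<bar>t\<bar> \<le> \<rho> \<Longrightarrow> \<bar>G'' (p + t)\<bar> \<le> M"
    and u: "\<bar>u\<bar> \<le> \<rho>" and v: "\<bar>v\<bar> \<le> \<rho>"
  shows "\<bar>(G (p + u) - G' p * u) - (G (p + v) - G' p * v)\<bar> \<le> M * \<rho> * \<bar>u - v\<bar>"
proof -
  have G'_diff_le: "\<bar>G' (p + t) - G' p\<bar> \<le> M * \<rho>" if t: "t \<in> {-\<rho>..\<rho>}" for t
  proof -
    have "norm (G' (p + t) - G' (p + 0)) \<le> M * norm (t - 0)"
    proof (rule field_differentiable_bound[of "{-\<rho>..\<rho>}" "\<lambda>t. G' (p + t)" "\<lambda>t. G'' (p + t)"])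
      show "((\<lambda>t. G' (p + t)) has_field_derivative G'' (p + z)) (at z within {-\<rho>..\<rho>})" for z
        by (rule has_field_derivative_at_within[OF DERIV_add_const_arg[OF G'_deriv]])
      show "norm (G'' (p + z)) \<le> M" if "z \<in> {-\<rho>..\<rho>}" for z
        using G''_le that by (simp add: abs_le_iff)
    qed (use t in auto)
    also have "\<dots> \<le> M * \<rho>"
      using t G''_le[of 0] by (intro mult_left_mono) (auto simp: abs_le_iff)
    finally show ?thesis by simp
  qed
  have "norm ((G (p + u) - G' p * u) - (G (p + v) - G' p * v)) \<le> (M * \<rho>) * norm (u - v)"
  proof (rule field_differentiable_bound[of "{-\<rho>..\<rho>}" "\<lambda>t. G (p + t) - G' p * t" "\<lambda>t. G' (p + t) - G' p"])
    show "((\<lambda>t. G (p + t) - G' p * t) has_field_derivative G' (p + z) - G' p) (at z within {-\<rho>..\<rho>})" for z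
      by (rule has_field_derivative_at_within[OF DERIV_diff[OF DERIV_add_const_arg[OF G_deriv] DERIV_cmult_Id]])
    show "norm (G' (p + z) - G' p) \<le> M * \<rho>" if "z \<in> {-\<rho>..\<rho>}" for z
      using G'_diff_le that by simp
  qed (use u v in \<open>auto simp: abs_le_iff\<close>)
  then show ?thesis by simp
qed

lemma uniform_deriv_approx:
  fixes G' G'' :: "real \<Rightarrow> real"
  assumes G'_deriv: "\<And>x. (G' has_real_derivative G'' x) (at x)"
    and G''_cont: "continuous_on UNIV G''" and "0 < \<epsilon>"
  obtains \<delta> where "0 < \<delta>"
    "\<And>p t. \<bar>p\<bar> \<le> R \<Longrightarrow> \<bar>t\<bar> \<le> \<delta> \<Longrightarrow> \<bar>G' (p + t) - G' p - G'' p * t\<bar> \<le> \<epsilon> * \<bar>t\<bar>"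
proof -
  have "uniformly_continuous_on {-R-1..R+1} G''"
    by (rule compact_uniformly_continuous[OF continuous_on_subset[OF G''_cont subset_UNIV] compact_Icc])
  then obtain \<delta>' where "0 < \<delta>'"
    and \<delta>': "\<forall>x\<in>{-R-1..R+1}. \<forall>y\<in>{-R-1..R+1}. dist y x < \<delta>' \<longrightarrow> dist (G'' y) (G'' x) < \<epsilon>"
    unfolding uniformly_continuous_on_def using \<open>0 < \<epsilon>\<close> by blast
  define \<delta> where "\<delta> = min 1 (\<delta>' / 2)"
  have "0 < \<delta>" "\<delta> \<le> 1" "\<delta> < \<delta>'" unfolding \<delta>_def using \<open>0 < \<delta>'\<close> by auto
  have "\<bar>G' (p + t) - G' p - G'' p * t\<bar> \<le> \<epsilon> * \<bar>t\<bar>" if p: "\<bar>p\<bar> \<le> R" and t: "\<bar>t\<bar> \<le> \<delta>" for p t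
  proof -
    have "norm ((G' (p + t) - G'' p * t) - (G' (p + 0) - G'' p * 0)) \<le> \<epsilon> * norm (t - 0)"
    proof (rule field_differentiable_bound[of "{-\<delta>..\<delta>}" "\<lambda>u. G' (p + u) - G'' p * u" "\<lambda>u. G'' (p + u) - G'' p"])
      show "((\<lambda>u. G' (p + u) - G'' p * u) has_field_derivative G'' (p + z) - G'' p) (at z within {-\<delta>..\<delta>})" for z
        by (rule has_field_derivative_at_within[OF DERIV_diff[OF DERIV_add_const_arg[OF G'_deriv] DERIV_cmult_Id]])
      show "norm (G'' (p + z) - G'' p) \<le> \<epsilon>" if "z \<in> {-\<delta>..\<delta>}" for z
      proof -
        have "p \<in> {-R-1..R+1}" "p + z \<in> {-R-1..R+1}" "dist (p + z) p < \<delta>'"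
          using p that \<open>\<delta> \<le> 1\<close> \<open>\<delta> < \<delta>'\<close> by (auto simp: dist_real_def abs_le_iff)
        then have "dist (G'' (p + z)) (G'' p) < \<epsilon>" using \<delta>' by blast
        then show ?thesis by (simp add: dist_norm)
      qed
    qed (use t \<open>0 < \<delta>\<close> in \<open>auto simp: abs_le_iff\<close>)
    then show ?thesis by (simp add: algebra_simps)
  qed
  with \<open>0 < \<delta>\<close> show ?thesis using that by blast
qed

definition periodic_ball :: "real \<Rightarrow> (real \<Rightarrow>\<^sub>C real) set" where
  "periodic_ball \<rho> = {d. (\<forall>x. apply_bcontfun d (x + 1) = apply_bcontfun d x) \<and> norm d \<le> \<rho>}"

lemma closed_periodic_ball: "closed (periodic_ball \<rho>)"
proof -
  have eval_cont: "continuous_on UNIV (\<lambda>d::real \<Rightarrow>\<^sub>C real. apply_bcontfun d x)" for x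
    by (rule lipschitz_on_continuous_on[of 1]) (rule lipschitz_onI, simp_all add: dist_bounded)
  have "periodic_ball \<rho> = {d. norm d \<le> \<rho>} \<inter> (\<Inter>x. {d. apply_bcontfun d (x + 1) = apply_bcontfun d x})"
    unfolding periodic_ball_def by auto
  then show ?thesis
    by (simp add: closed_Int closed_INT closed_Collect_le[OF continuous_on_norm_id continuous_on_const]
        closed_Collect_eq[OF eval_cont eval_cont])
qed

lemma periodic_ballD:
  assumes "d \<in> periodic_ball \<rho>"
  shows "cont_periodic (apply_bcontfun d)" "\<bar>apply_bcontfun d x\<bar> \<le> \<rho>"
  using assms norm_bounded[of d x] unfolding periodic_ball_def cont_periodic_def by auto

lemma apply_Bcontfun_cont_periodic:
  assumes "cont_periodic q"
  shows "apply_bcontfun (Bcontfun q) = q"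
proof -
  obtain B where "\<And>x. \<bar>q x\<bar> \<le> B" using cont_periodic_bounded[OF assms] by blast
  then have "q \<in> bcontfun" by (intro bcontfun_normI[OF cont_periodicD(1)[OF assms]]) simp
  then show ?thesis by (rule Bcontfun_inverse)
qed

locale periodic_perturbation =
  fixes G G' G'' f f' :: "real \<Rightarrow> real" and K :: real
  assumes G_deriv: "\<And>x. (G has_real_derivative G' x) (at x)"
    and G'_deriv: "\<And>x. (G' has_real_derivative G'' x) (at x)"
    and G''_cont: "continuous_on UNIV G''"
    and f_periodic: "\<And>x. f (x + 1) = f x"
    and f_deriv: "\<And>x. (f has_real_derivative f' x) (at x)"
    and f'_cont: "continuous_on UNIV f'"
    and mean_G'_f: "integral {0..1} (\<lambda>x. G' (f x)) = 0"
    and abs_G'_f_le: "\<And>x. \<bar>G' (f x)\<bar> \<le> K"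
begin

lemma G_cont: "continuous_on UNIV G"
  by (rule DERIV_continuous_on[OF G_deriv])

lemma G'_cont: "continuous_on UNIV G'"
  by (rule DERIV_continuous_on[OF G'_deriv])

lemma cont_periodic_f: "cont_periodic f"
  unfolding cont_periodic_def
  using f_periodic DERIV_continuous_on[OF f_deriv] by blast

sublocale zero_mean_drift "\<lambda>x. G' (f x)" K
  by unfold_locales (fact cont_periodic_compose[OF G'_cont cont_periodic_f] mean_G'_f abs_G'_f_le)+

definition f_sup :: real where
  "f_sup = (SUP x. \<bar>f x\<bar>)"

lemma abs_f_le: "\<bar>f x\<bar> \<le> f_sup"
proof -
  obtain B where "\<And>x. \<bar>f x\<bar> \<le> B" using cont_periodic_bounded[OF cont_periodic_f] by blast
  then show ?thesis unfolding f_sup_def by (intro cSUP_upper bdd_aboveI2) auto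
qed

definition M2 :: real where
  "M2 = max 1 (SUP p \<in> {-f_sup-1..f_sup+1}. \<bar>G'' p\<bar>)"

lemma M2_ge_1: "1 \<le> M2"
  unfolding M2_def by simp

lemma abs_G''_le_M2:
  assumes "\<bar>t\<bar> \<le> 1"
  shows "\<bar>G'' (f s + t)\<bar> \<le> M2"
proof -
  have "f s + t \<in> {-f_sup-1..f_sup+1}" using assms abs_f_le[of s] by (auto simp: abs_le_iff)
  then have "\<bar>G'' (f s + t)\<bar> \<le> (SUP p \<in> {-f_sup-1..f_sup+1}. \<bar>G'' p\<bar>)"
    by (rule abs_le_SUP_Icc[OF G''_cont])
  then show ?thesis unfolding M2_def by linarith
qed

definition nonlin :: "real \<Rightarrow> real \<Rightarrow> real" where
  "nonlin s u = G (f s + u) - G (f s) - G' (f s) * u"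

lemma nonlin_lipschitz:
  assumes "\<rho> \<le> 1" "\<bar>u\<bar> \<le> \<rho>" "\<bar>v\<bar> \<le> \<rho>"
  shows "\<bar>nonlin s u - nonlin s v\<bar> \<le> M2 * \<rho> * \<bar>u - v\<bar>"
proof -
  have "\<bar>G'' (f s + t)\<bar> \<le> M2" if "\<bar>t\<bar> \<le> \<rho>" for t
    using that assms(1) by (intro abs_G''_le_M2) simp
  from deriv_remainder_lipschitz[OF G_deriv G'_deriv this assms(2,3)]
  have "\<bar>(G (f s + u) - G' (f s) * u) - (G (f s + v) - G' (f s) * v)\<bar> \<le> M2 * \<rho> * \<bar>u - v\<bar>" .
  moreover have "nonlin s u - nonlin s v = (G (f s + u) - G' (f s) * u) - (G (f s + v) - G' (f s) * v)"
    unfolding nonlin_def by linarith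
  ultimately show ?thesis by simp
qed

lemma abs_nonlin_le: "\<rho> \<le> 1 \<Longrightarrow> \<bar>u\<bar> \<le> \<rho> \<Longrightarrow> \<bar>nonlin s u\<bar> \<le> M2 * \<rho> * \<bar>u\<bar>"
  using nonlin_lipschitz[of \<rho> u 0 s] by (simp add: nonlin_def)

lemma cont_periodic_nonlin: "cont_periodic d \<Longrightarrow> cont_periodic (\<lambda>s. nonlin s (d s))"
  unfolding nonlin_def
  by (intro cont_periodic_intros cont_periodic_compose[OF G_cont] cont_periodic_compose[OF G'_cont]
      cont_periodic_f)

definition fp_map :: "real \<Rightarrow> (real \<Rightarrow> real) \<Rightarrow> real \<Rightarrow> real" where
  "fp_map c d x = c * w x + lin_sol (\<lambda>s. nonlin s (d s)) x"

definition fp_map_bcf :: "real \<Rightarrow> (real \<Rightarrow>\<^sub>C real) \<Rightarrow> (real \<Rightarrow>\<^sub>C real)" where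
  "fp_map_bcf c d = Bcontfun (fp_map c (apply_bcontfun d))"

lemma cont_periodic_fp_map: "cont_periodic d \<Longrightarrow> cont_periodic (fp_map c d)"
  unfolding fp_map_def[abs_def]
  by (intro cont_periodic_intros cont_periodic_w cont_periodic_lin_sol cont_periodic_nonlin)

lemma apply_fp_map_bcf:
  "cont_periodic (apply_bcontfun d) \<Longrightarrow> apply_bcontfun (fp_map_bcf c d) = fp_map c (apply_bcontfun d)"
  unfolding fp_map_bcf_def by (intro apply_Bcontfun_cont_periodic cont_periodic_fp_map)

lemma C_lin_pos: "0 < C_lin"
  unfolding C_lin_def by (intro mult_pos_pos zero_less_power add_pos_pos) auto

lemma abs_lin_sol_nonlin_le:
  assumes "cont_periodic d" "\<delta> \<le> 1" "\<And>s. \<bar>d s\<bar> \<le> \<delta>"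
  shows "\<bar>lin_sol (\<lambda>s. nonlin s (d s)) x\<bar> \<le> C_lin * (M2 * \<delta> * \<delta>)"
proof (rule abs_lin_sol_le[OF cont_periodic_nonlin[OF assms(1)]])
  fix s
  have "\<bar>nonlin s (d s)\<bar> \<le> M2 * \<delta> * \<bar>d s\<bar>" by (rule abs_nonlin_le[OF assms(2,3)])
  also have "\<dots> \<le> M2 * \<delta> * \<delta>"
    using assms(3)[of s] M2_ge_1 abs_ge_zero[of "d s"] by (intro mult_left_mono) auto
  finally show "\<bar>nonlin s (d s)\<bar> \<le> M2 * \<delta> * \<delta>" .
qed

text \<open>On the periodic ball of radius \<open>\<rho>0\<close> the map \<open>fp_map c\<close> is a contraction with
  constant \<open>1/2\<close>; for \<open>\<bar>c\<bar> \<le> c0\<close> it maps this ball into itself.\<close>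

definition \<rho>0 :: real where
  "\<rho>0 = min 1 (1 / (2 * C_lin * M2))"

definition c0 :: real where
  "c0 = \<rho>0 / (2 * exp (2 * K))"

lemma \<rho>0_pos: "0 < \<rho>0"
  unfolding \<rho>0_def using C_lin_pos M2_ge_1 by simp

lemma \<rho>0_le_1: "\<rho>0 \<le> 1"
  unfolding \<rho>0_def by simp

lemma contraction_factor: "C_lin * M2 * \<rho>0 \<le> 1 / 2"
proof -
  have "C_lin * M2 * \<rho>0 \<le> C_lin * M2 * (1 / (2 * C_lin * M2))"
    unfolding \<rho>0_def using C_lin_pos M2_ge_1 by (intro mult_left_mono) auto
  also have "\<dots> = 1 / 2" using C_lin_pos M2_ge_1 by simp
  finally show ?thesis .
qed

lemma c0_pos: "0 < c0"
  unfolding c0_def using \<rho>0_pos by simp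

lemma fp_map_bcf_maps:
  assumes c: "\<bar>c\<bar> \<le> c0" and d: "d \<in> periodic_ball \<rho>0"
  shows "fp_map_bcf c d \<in> periodic_ball \<rho>0"
proof -
  note d_periodic = periodic_ballD(1)[OF d]
  have "\<bar>fp_map c (apply_bcontfun d) x\<bar> \<le> \<rho>0" for x
  proof -
    have "\<bar>c * w x\<bar> \<le> c0 * exp (2 * K)"
      unfolding abs_mult using c abs_w_le[of x] by (intro mult_mono) auto
    also have "\<dots> = \<rho>0 / 2" unfolding c0_def by simp
    finally have "\<bar>c * w x\<bar> \<le> \<rho>0 / 2" .
    moreover have "\<bar>lin_sol (\<lambda>s. nonlin s (apply_bcontfun d s)) x\<bar> \<le> (C_lin * M2 * \<rho>0) * \<rho>0"
      using abs_lin_sol_nonlin_le[OF d_periodic \<rho>0_le_1 periodic_ballD(2)[OF d]] by (simp add: mult.assoc)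
    moreover have "(C_lin * M2 * \<rho>0) * \<rho>0 \<le> \<rho>0 / 2"
      using mult_right_mono[OF contraction_factor less_imp_le[OF \<rho>0_pos]] by simp
    ultimately show ?thesis unfolding fp_map_def by linarith
  qed
  then have "norm (fp_map_bcf c d) \<le> \<rho>0"
    by (intro norm_bound) (simp add: apply_fp_map_bcf[OF d_periodic])
  then show ?thesis
    unfolding periodic_ball_def
    using cont_periodicD(2)[OF cont_periodic_fp_map[OF d_periodic]] by (simp add: apply_fp_map_bcf[OF d_periodic])
qed

lemma fp_map_bcf_contraction:
  assumes d1: "d1 \<in> periodic_ball \<rho>0" and d2: "d2 \<in> periodic_ball \<rho>0"
  shows "dist (fp_map_bcf c d1) (fp_map_bcf c d2) \<le> 1 / 2 * dist d1 d2"
proof -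
  define q1 where "q1 s = nonlin s (apply_bcontfun d1 s)" for s
  define q2 where "q2 s = nonlin s (apply_bcontfun d2 s)" for s
  have q1: "cont_periodic q1" and q2: "cont_periodic q2"
    unfolding q1_def[abs_def] q2_def[abs_def]
    using cont_periodic_nonlin periodic_ballD(1)[OF d1] periodic_ballD(1)[OF d2] by blast+
  have "\<bar>q1 s - q2 s\<bar> \<le> M2 * \<rho>0 * dist d1 d2" for s
  proof -
    have "\<bar>q1 s - q2 s\<bar> \<le> M2 * \<rho>0 * \<bar>apply_bcontfun d1 s - apply_bcontfun d2 s\<bar>"
      unfolding q1_def q2_def
      by (rule nonlin_lipschitz[OF \<rho>0_le_1 periodic_ballD(2)[OF d1] periodic_ballD(2)[OF d2]])
    also have "\<dots> \<le> M2 * \<rho>0 * dist d1 d2"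
      using dist_bounded[of d1 s d2] M2_ge_1 \<rho>0_pos by (intro mult_left_mono) (auto simp: dist_real_def)
    finally show ?thesis .
  qed
  then have "\<bar>lin_sol (\<lambda>s. q1 s - q2 s) x\<bar> \<le> (C_lin * M2 * \<rho>0) * dist d1 d2" for x
    using abs_lin_sol_le[OF cont_periodic_diff[OF q1 q2]] by (simp add: mult.assoc)
  also have "\<dots> \<le> 1 / 2 * dist d1 d2" for x::real
    by (intro mult_right_mono contraction_factor) simp
  finally have lin_sol_le: "\<bar>lin_sol (\<lambda>s. q1 s - q2 s) x\<bar> \<le> 1 / 2 * dist d1 d2" for x .
  have "apply_bcontfun (fp_map_bcf c d1) x - apply_bcontfun (fp_map_bcf c d2) x = lin_sol (\<lambda>s. q1 s - q2 s) x" for x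
    unfolding apply_fp_map_bcf[OF periodic_ballD(1)[OF d1]] apply_fp_map_bcf[OF periodic_ballD(1)[OF d2]]
      fp_map_def lin_sol_diff[OF q1 q2]
    by (simp add: q1_def[abs_def] q2_def[abs_def])
  then have "norm (fp_map_bcf c d1 - fp_map_bcf c d2) \<le> 1 / 2 * dist d1 d2"
    using lin_sol_le by (intro norm_bound) simp
  then show ?thesis by (simp add: dist_norm)
qed

lemma fp_map_bcf_fixed_point:
  assumes c: "\<bar>c\<bar> \<le> c0"
  shows "\<exists>D \<in> periodic_ball \<rho>0. fp_map_bcf c D = D"
proof -
  have "\<exists>!D \<in> periodic_ball \<rho>0. fp_map_bcf c D = D"
  proof (rule Banach_fix[where c = "1 / 2"])
    show "complete (periodic_ball \<rho>0)" by (simp add: complete_eq_closed closed_periodic_ball)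
    show "periodic_ball \<rho>0 \<noteq> {}" using \<rho>0_pos by (auto simp: periodic_ball_def intro!: exI[of _ 0])
    show "fp_map_bcf c ` periodic_ball \<rho>0 \<subseteq> periodic_ball \<rho>0" using fp_map_bcf_maps[OF c] by blast
  qed (use fp_map_bcf_contraction in auto)
  then show ?thesis by blast
qed

lemma small_fixed_point:
  assumes c: "\<bar>c\<bar> \<le> c0"
  obtains d where "cont_periodic d" "\<And>x. fp_map c d x = d x"
    "\<And>x. \<bar>d x\<bar> \<le> 2 * \<bar>c\<bar> * exp (2 * K)"
    "\<And>x. \<bar>d x - c * w x\<bar> \<le> C_lin * M2 * (2 * \<bar>c\<bar> * exp (2 * K))\<^sup>2"
proof -
  obtain D where D: "D \<in> periodic_ball \<rho>0" "fp_map_bcf c D = D"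
    using fp_map_bcf_fixed_point[OF c] by blast
  define d where "d = apply_bcontfun D"
  have d: "cont_periodic d" unfolding d_def by (rule periodic_ballD(1)[OF D(1)])
  have fixed: "fp_map c d x = d x" for x
    using apply_fp_map_bcf[OF d[unfolded d_def], of c] D(2) unfolding d_def by simp
  define \<delta> where "\<delta> = norm D"
  have "\<delta> \<le> \<rho>0" "0 \<le> \<delta>" using D(1) unfolding periodic_ball_def \<delta>_def by auto
  have d_le: "\<bar>d s\<bar> \<le> \<delta>" for s unfolding d_def \<delta>_def using norm_bounded[of D s] by simp
  have lin_sol_le: "\<bar>lin_sol (\<lambda>s. nonlin s (d s)) x\<bar> \<le> C_lin * M2 * \<delta> * \<delta>" for x
    using abs_lin_sol_nonlin_le[OF d _ d_le] \<open>\<delta> \<le> \<rho>0\<close> \<rho>0_le_1 by (simp add: mult.assoc)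
  have "C_lin * M2 * \<delta> * \<delta> \<le> C_lin * M2 * \<rho>0 * \<delta>"
    using \<open>\<delta> \<le> \<rho>0\<close> \<open>0 \<le> \<delta>\<close> C_lin_pos M2_ge_1 by (intro mult_right_mono mult_left_mono) auto
  also have "\<dots> \<le> \<delta> / 2"
    using mult_right_mono[OF contraction_factor \<open>0 \<le> \<delta>\<close>] by simp
  finally have lin_sol_half: "\<bar>lin_sol (\<lambda>s. nonlin s (d s)) x\<bar> \<le> \<delta> / 2" for x
    using lin_sol_le[of x] by linarith
  have cw_le: "\<bar>c * w x\<bar> \<le> \<bar>c\<bar> * exp (2 * K)" for x
    unfolding abs_mult using abs_w_le[of x] by (intro mult_left_mono) auto
  have "\<bar>d x\<bar> \<le> \<bar>c\<bar> * exp (2 * K) + \<delta> / 2" for x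
    using fixed[of x] lin_sol_half[of x] cw_le[of x]
      abs_triangle_ineq[of "c * w x" "lin_sol (\<lambda>s. nonlin s (d s)) x"]
    unfolding fp_map_def by linarith
  then have "\<delta> \<le> \<bar>c\<bar> * exp (2 * K) + \<delta> / 2"
    unfolding \<delta>_def by (intro norm_bound) (simp add: d_def)
  then have \<delta>_le: "\<delta> \<le> 2 * \<bar>c\<bar> * exp (2 * K)" by simp
  have "\<bar>d x - c * w x\<bar> \<le> C_lin * M2 * (\<delta> * \<delta>)" for x
    using fixed[of x] lin_sol_le[of x] unfolding fp_map_def by (simp add: mult.assoc)
  also have "\<dots> \<le> C_lin * M2 * (2 * \<bar>c\<bar> * exp (2 * K))\<^sup>2"
    unfolding power2_eq_square using \<delta>_le \<open>0 \<le> \<delta>\<close> C_lin_pos M2_ge_1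
    by (intro mult_left_mono mult_mono) auto
  finally show ?thesis using that d fixed d_le \<delta>_le by (meson order_trans)
qed

lemma per_sol_fixed_point:
  assumes d: "cont_periodic d" and fixed: "\<And>x. fp_map c d x = d x"
  shows "per_sol G (\<lambda>x. - f' x - G (f x)) (integral {0..1} f + c) (\<lambda>x. f x + d x)"
proof -
  define q where "q s = nonlin s (d s)" for s
  have q: "cont_periodic q" unfolding q_def[abs_def] by (rule cont_periodic_nonlin[OF d])
  have d_eq: "d = (\<lambda>x. c * w x + lin_sol q x)"
    using fixed unfolding fp_map_def q_def[abs_def] by (auto simp: fun_eq_iff)
  have d_deriv: "(d has_real_derivative - G' (f x) * d x + (Hlin q - q x)) (at x)" for x
  proof -
    have "((\<lambda>x. c * w x + lin_sol q x) has_real_derivative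
        c * (- G' (f x) * w x) + (- G' (f x) * lin_sol q x + (Hlin q - q x))) (at x)"
      by (rule DERIV_add[OF DERIV_cmult[OF w_deriv] lin_sol_deriv[OF q]])
    then show ?thesis unfolding d_eq[symmetric] by (rule DERIV_cong) (subst d_eq, simp add: algebra_simps)
  qed
  define g' where "g' x = f' x + (- G' (f x) * d x + (Hlin q - q x))" for x
  have "((\<lambda>x. f x + d x) has_real_derivative g' x) (at x)" for x
    unfolding g'_def by (rule DERIV_add[OF f_deriv d_deriv])
  moreover have "continuous_on UNIV g'"
    unfolding g'_def[abs_def]
    using f'_cont cont_periodicD(1)[OF cont_periodic_f] cont_periodicD(1)[OF d] cont_periodicD(1)[OF q]
    by (intro continuous_intros continuous_on_compose2[OF G'_cont]) auto
  moreover have "g' x + G (f x + d x) + (- f' x - G (f x)) = Hlin q" for x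
    unfolding g'_def q_def nonlin_def by (simp add: algebra_simps)
  moreover have "f (x + 1) + d (x + 1) = f x + d x" for x
    using f_periodic[of x] cont_periodicD(2)[OF d, of x] by simp
  moreover have "integral {0..1} d = c"
    unfolding d_eq using integral_w integral_lin_sol[OF q] cont_periodic_w cont_periodic_lin_sol[OF q]
    by (simp add: integral_add cont_periodic_integrable cont_periodic_intros)
  then have "integral {0..1} (\<lambda>x. f x + d x) = integral {0..1} f + c"
    using cont_periodic_f d by (simp add: integral_add cont_periodic_integrable)
  ultimately show ?thesis unfolding per_sol_def by blast
qed

lemma f_theta_near_f:
  assumes "\<bar>c\<bar> \<le> c0"
  obtains d where "f_theta G (\<lambda>x. - f' x - G (f x)) (integral {0..1} f + c) = (\<lambda>x. f x + d x)"
    "cont_periodic d" "\<And>x. \<bar>d x\<bar> \<le> 2 * \<bar>c\<bar> * exp (2 * K)"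
    "\<And>x. \<bar>d x - c * w x\<bar> \<le> C_lin * M2 * (2 * \<bar>c\<bar> * exp (2 * K))\<^sup>2"
proof -
  obtain d where d: "cont_periodic d" "\<And>x. fp_map c d x = d x"
    "\<And>x. \<bar>d x\<bar> \<le> 2 * \<bar>c\<bar> * exp (2 * K)"
    "\<And>x. \<bar>d x - c * w x\<bar> \<le> C_lin * M2 * (2 * \<bar>c\<bar> * exp (2 * K))\<^sup>2"
    using small_fixed_point[OF assms] by blast
  show ?thesis
    by (rule that[OF f_theta_eqI[OF G_deriv G'_cont per_sol_fixed_point[OF d(1,2)]] d(1,3,4)])
qed

lemma abs_G'_perturbation_le:
  "\<bar>G' (f x + u) - G' (f x) - c * (G'' (f x) * w x)\<bar>
    \<le> \<bar>G' (f x + u) - G' (f x) - G'' (f x) * u\<bar> + M2 * \<bar>u - c * w x\<bar>"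
proof -
  have "\<bar>G'' (f x) * (u - c * w x)\<bar> \<le> M2 * \<bar>u - c * w x\<bar>"
    unfolding abs_mult using abs_G''_le_M2[of 0 x] by (intro mult_right_mono) auto
  moreover have "G' (f x + u) - G' (f x) - c * (G'' (f x) * w x)
      = (G' (f x + u) - G' (f x) - G'' (f x) * u) + G'' (f x) * (u - c * w x)"
    by (simp add: algebra_simps)
  ultimately show ?thesis
    using abs_triangle_ineq[of "G' (f x + u) - G' (f x) - G'' (f x) * u" "G'' (f x) * (u - c * w x)"]
    by linarith
qed

lemma abs_integral_G'_perturbation_le:
  assumes d: "cont_periodic d"
    and le: "\<And>x. \<bar>G' (f x + d x) - G' (f x) - c * (G'' (f x) * w x)\<bar> \<le> B"
  shows "\<bar>integral {0..1} (\<lambda>x. G' (f x + d x)) - c * integral {0..1} (\<lambda>x. G'' (f x) * w x)\<bar> \<le> B"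
proof -
  define R where "R x = G' (f x + d x) - G' (f x) - c * (G'' (f x) * w x)" for x
  have cont: "continuous_on UNIV (\<lambda>x. G' (f x + d x))" "continuous_on UNIV (\<lambda>x. G' (f x))"
    "continuous_on UNIV (\<lambda>x. G'' (f x) * w x)"
    using cont_periodicD(1)[OF cont_periodic_f] cont_periodicD(1)[OF d] cont_periodicD(1)[OF cont_periodic_w]
    by (intro continuous_intros continuous_on_compose2[OF G'_cont] continuous_on_compose2[OF G''_cont]; simp)+
  have R_cont: "continuous_on UNIV R"
    unfolding R_def[abs_def]
    by (rule continuous_on_diff[OF continuous_on_diff[OF cont(1,2)] continuous_on_mult[OF continuous_on_const cont(3)]])
  have "norm (integral {0..1} R) \<le> B * (1 - 0)"
    by (rule integral_bound[OF zero_le_one continuous_on_subset[OF R_cont subset_UNIV]]) (use le in \<open>simp add: R_def\<close>)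
  moreover have "integral {0..1} R
      = integral {0..1} (\<lambda>x. G' (f x + d x)) - c * integral {0..1} (\<lambda>x. G'' (f x) * w x)"
    unfolding R_def using mean_G'_f
      continuous_on_UNIV_integrable[OF cont(1)] continuous_on_UNIV_integrable[OF cont(2)]
      continuous_on_UNIV_integrable[OF continuous_on_mult[OF continuous_on_const cont(3)], of c]
    by (simp add: integral_diff integrable_diff)
  ultimately show ?thesis by simp
qed

lemma I_one_expansion:
  assumes "0 < \<epsilon>"
  obtains c1 where "0 < c1"
    "\<And>c. \<bar>c\<bar> < c1 \<Longrightarrow> \<bar>I_one G G' (\<lambda>x. - f' x - G (f x)) (integral {0..1} f + c)
        - c * integral {0..1} (\<lambda>x. G'' (f x) * w x)\<bar> \<le> \<epsilon> * \<bar>c\<bar>"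
proof -
  define \<kappa> where "\<kappa> = exp (2 * K)"
  have "0 < \<kappa>" unfolding \<kappa>_def by simp
  obtain \<delta> where "0 < \<delta>" and taylor: "\<And>p t. \<bar>p\<bar> \<le> f_sup \<Longrightarrow> \<bar>t\<bar> \<le> \<delta> \<Longrightarrow>
      \<bar>G' (p + t) - G' p - G'' p * t\<bar> \<le> \<epsilon> / (4 * \<kappa>) * \<bar>t\<bar>"
    using uniform_deriv_approx[OF G'_deriv G''_cont, of "\<epsilon> / (4 * \<kappa>)"] \<open>0 < \<epsilon>\<close> \<open>0 < \<kappa>\<close> by auto
  define Kq where "Kq = M2 * (C_lin * M2 * (4 * \<kappa>\<^sup>2))"
  have "0 < Kq" unfolding Kq_def using M2_ge_1 C_lin_pos \<open>0 < \<kappa>\<close> by simp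
  define c1 where "c1 = min c0 (min (\<delta> / (2 * \<kappa>)) (\<epsilon> / (2 * Kq)))"
  have "0 < c1" unfolding c1_def using c0_pos \<open>0 < \<delta>\<close> \<open>0 < \<kappa>\<close> \<open>0 < \<epsilon>\<close> \<open>0 < Kq\<close> by simp
  moreover have "\<bar>I_one G G' (\<lambda>x. - f' x - G (f x)) (integral {0..1} f + c)
      - c * integral {0..1} (\<lambda>x. G'' (f x) * w x)\<bar> \<le> \<epsilon> * \<bar>c\<bar>" if "\<bar>c\<bar> < c1" for c
  proof -
    obtain d where f_theta: "f_theta G (\<lambda>x. - f' x - G (f x)) (integral {0..1} f + c) = (\<lambda>x. f x + d x)"
      and d: "cont_periodic d" and d_le: "\<And>x. \<bar>d x\<bar> \<le> 2 * \<bar>c\<bar> * \<kappa>"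
      and d_approx: "\<And>x. \<bar>d x - c * w x\<bar> \<le> C_lin * M2 * (2 * \<bar>c\<bar> * \<kappa>)\<^sup>2"
      using f_theta_near_f[of c] \<open>\<bar>c\<bar> < c1\<close> unfolding c1_def \<kappa>_def by auto
    have "2 * \<bar>c\<bar> * \<kappa> \<le> \<delta>"
      using \<open>\<bar>c\<bar> < c1\<close> \<open>0 < \<kappa>\<close> unfolding c1_def by (simp add: field_simps)
    have "\<bar>c\<bar> \<le> \<epsilon> / (2 * Kq)" using \<open>\<bar>c\<bar> < c1\<close> unfolding c1_def by simp
    then have Kq_c: "Kq * \<bar>c\<bar> \<le> \<epsilon> / 2" using \<open>0 < Kq\<close> by (simp add: field_simps)
    have "\<bar>G' (f x + d x) - G' (f x) - c * (G'' (f x) * w x)\<bar> \<le> \<epsilon> * \<bar>c\<bar>" for x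
    proof -
      have "\<bar>G' (f x + d x) - G' (f x) - G'' (f x) * d x\<bar> \<le> \<epsilon> / (4 * \<kappa>) * \<bar>d x\<bar>"
        using taylor[OF abs_f_le] d_le[of x] \<open>2 * \<bar>c\<bar> * \<kappa> \<le> \<delta>\<close> by auto
      also have "\<dots> \<le> \<epsilon> / (4 * \<kappa>) * (2 * \<bar>c\<bar> * \<kappa>)"
        using d_le[of x] \<open>0 < \<epsilon>\<close> \<open>0 < \<kappa>\<close> by (intro mult_left_mono) auto
      also have "\<dots> = \<epsilon> / 2 * \<bar>c\<bar>" using \<open>0 < \<kappa>\<close> by simp
      finally have "\<bar>G' (f x + d x) - G' (f x) - G'' (f x) * d x\<bar> \<le> \<epsilon> / 2 * \<bar>c\<bar>" .
      moreover have "M2 * \<bar>d x - c * w x\<bar> \<le> Kq * \<bar>c\<bar> * \<bar>c\<bar>"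
        using mult_left_mono[OF d_approx[of x], of M2] M2_ge_1
        unfolding Kq_def by (simp add: power2_eq_square algebra_simps)
      moreover have "Kq * \<bar>c\<bar> * \<bar>c\<bar> \<le> \<epsilon> / 2 * \<bar>c\<bar>"
        by (rule mult_right_mono[OF Kq_c abs_ge_zero])
      ultimately show ?thesis using abs_G'_perturbation_le[of x "d x" c] by linarith
    qed
    then show ?thesis unfolding I_one_def f_theta by (rule abs_integral_G'_perturbation_le[OF d])
  qed
  ultimately show ?thesis using that by blast
qed

lemma I_one_base: "I_one G G' (\<lambda>x. - f' x - G (f x)) (integral {0..1} f) = 0"
proof -
  obtain c1 where "0 < c1" and "\<And>c. \<bar>c\<bar> < c1 \<Longrightarrow> \<bar>I_one G G' (\<lambda>x. - f' x - G (f x)) (integral {0..1} f + c)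
      - c * integral {0..1} (\<lambda>x. G'' (f x) * w x)\<bar> \<le> 1 * \<bar>c\<bar>"
    using I_one_expansion[OF zero_less_one] by blast
  from this(2)[of 0] \<open>0 < c1\<close> show ?thesis by simp
qed

lemma I_one_has_real_derivative:
  "((\<lambda>c. I_one G G' (\<lambda>x. - f' x - G (f x)) (integral {0..1} f + c))
     has_real_derivative integral {0..1} (\<lambda>x. G'' (f x) * w x)) (at 0)"
proof -
  define F where "F c = I_one G G' (\<lambda>x. - f' x - G (f x)) (integral {0..1} f + c)" for c
  define J where "J = integral {0..1} (\<lambda>x. G'' (f x) * w x)"
  have "((\<lambda>c. (F c - F 0) / (c - 0)) \<longlongrightarrow> J) (at 0)"
  proof (rule LIM_I)
    fix r :: real assume "0 < r"
    then obtain c1 where "0 < c1" and c1: "\<And>c. \<bar>c\<bar> < c1 \<Longrightarrow> \<bar>F c - c * J\<bar> \<le> r / 2 * \<bar>c\<bar>"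
      using I_one_expansion[of "r / 2"] unfolding F_def J_def by auto
    have "norm ((F c - F 0) / (c - 0) - J) < r" if "c \<noteq> 0" "norm (c - 0) < c1" for c
    proof -
      have "(F c - F 0) / (c - 0) - J = (F c - c * J) / c"
        using that(1) I_one_base unfolding F_def by (simp add: field_simps)
      also have "\<bar>\<dots>\<bar> \<le> r / 2"
        using c1[of c] that by (simp add: abs_divide divide_le_eq)
      finally show ?thesis using \<open>0 < r\<close> by simp
    qed
    with \<open>0 < c1\<close> show "\<exists>s>0. \<forall>c. c \<noteq> 0 \<and> norm (c - 0) < s \<longrightarrow> norm ((F c - F 0) / (c - 0) - J) < r"
      by blast
  qed
  then show ?thesis unfolding has_field_derivative_iff F_def J_def by simp
qed

end

section \<open>The sign of the derivative\<close>

lemma integral_two_level_le: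
  fixes g \<rho> :: "real \<Rightarrow> real"
  assumes cont: "continuous_on UNIV g" "continuous_on UNIV \<rho>"
    and \<rho>_bounds: "\<And>x. lo \<le> \<rho> x" "\<And>x. \<rho> x \<le> hi" and "0 \<le> lo"
    and l: "0 < l" "l < min L (1 - L)"
    and g_\<alpha>: "\<And>x. x \<in> {0..L - l} \<Longrightarrow> g x = \<alpha>" and "\<alpha> \<le> 0"
    and g_\<beta>: "\<And>x. x \<in> {L..1 - l} \<Longrightarrow> g x = \<beta>" and "0 \<le> \<beta>"
    and abs_g_le: "\<And>x. \<bar>g x\<bar> \<le> M"
  shows "integral {0..1} (\<lambda>x. g x * \<rho> x) \<le> (L - l) * \<alpha> * lo + ((1 - L - l) * \<beta> + 2 * l * M) * hi"
proof -
  define u where "u x = g x * \<rho> x" for x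
  have u_int: "u integrable_on {a..b}" for a b
    unfolding u_def by (intro continuous_on_UNIV_integrable continuous_on_mult cont)
  have u_le: "integral {a..b} u \<le> (b - a) * k" if "a \<le> b" "\<And>x. x \<in> {a..b} \<Longrightarrow> u x \<le> k" for a b k
    using integral_le[OF u_int integrable_const_ivl, of a b k] that by simp
  have "integral {0..1} u = integral {0..L - l} u + integral {L - l..L} u + integral {L..1 - l} u
      + integral {1 - l..1} u"
    using l by (simp add: Henstock_Kurzweil_Integration.integral_combine u_int)
  also have "\<dots> \<le> (L - l) * (\<alpha> * lo) + l * (M * hi) + (1 - l - L) * (\<beta> * hi) + l * (M * hi)"
  proof -
    have u_le_M: "u x \<le> M * hi" for x
    proof -
      have "0 \<le> \<rho> x" "0 \<le> M" using \<rho>_bounds(1)[of x] \<open>0 \<le> lo\<close> abs_g_le[of x] by linarith+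
      then have "g x * \<rho> x \<le> M * \<rho> x"
        using abs_g_le[of x] by (intro mult_right_mono) (auto simp: abs_le_iff)
      also have "\<dots> \<le> M * hi" using \<open>0 \<le> M\<close> by (intro mult_left_mono \<rho>_bounds(2))
      finally show ?thesis unfolding u_def .
    qed
    have u_le_\<alpha>: "u x \<le> \<alpha> * lo" if "x \<in> {0..L - l}" for x
      unfolding u_def using g_\<alpha>[OF that] \<rho>_bounds(1)[of x] \<open>\<alpha> \<le> 0\<close> by (simp add: mult_left_mono_neg)
    have u_le_\<beta>: "u x \<le> \<beta> * hi" if "x \<in> {L..1 - l}" for x
      unfolding u_def using g_\<beta>[OF that] \<rho>_bounds(2)[of x] \<open>0 \<le> \<beta>\<close> by (simp add: mult_left_mono)
    have "integral {0..L - l} u \<le> (L - l) * (\<alpha> * lo)"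
      using u_le[of 0 "L - l" "\<alpha> * lo"] l u_le_\<alpha> by simp
    moreover have "integral {L - l..L} u \<le> l * (M * hi)"
      using u_le[of "L - l" L "M * hi"] l u_le_M by simp
    moreover have "integral {L..1 - l} u \<le> (1 - l - L) * (\<beta> * hi)"
      using u_le[of L "1 - l" "\<beta> * hi"] l u_le_\<beta> by simp
    moreover have "integral {1 - l..1} u \<le> l * (M * hi)"
      using u_le[of "1 - l" 1 "M * hi"] l u_le_M by simp
    ultimately show ?thesis by linarith
  qed
  finally show ?thesis unfolding u_def by (simp add: algebra_simps)
qed

theorem lemma5p4:
  fixes G G' G'' :: "real \<Rightarrow> real" and f f' :: "real \<Rightarrow> real"
    and p1 p2 l L K1 K2 \<theta>0 :: real and V :: "real \<Rightarrow> real"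
  assumes G_deriv: "\<And>x. (G has_real_derivative G' x) (at x)"
    and G'_deriv: "\<And>x. (G' has_real_derivative G'' x) (at x)"
    and G''_cont: "continuous_on UNIV G''"
    and coercive: "filterlim G at_top at_top" "filterlim G at_top at_bot"
    and p12: "p1 < p2"
    and Gp1: "G' p1 < 0" and Gp2: "0 < G' p2"
    and L_def: "L = G' p2 / (G' p2 - G' p1)"
    and K1_def: "K1 = Sup ((\<lambda>p. \<bar>G' p\<bar>) ` {p1..p2})"
    and K2_def: "K2 = Sup ((\<lambda>p. \<bar>G'' p\<bar>) ` {p1..p2})"
    and f_per: "\<And>x. f (x + 1) = f x"
    and f_deriv: "\<And>x. (f has_real_derivative f' x) (at x)"
    and f'_lip: "\<exists>M. lipschitz_on M UNIV f'"
    and f_bounds: "\<And>x. p1 \<le> f x \<and> f x \<le> p2"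
    and f_p1: "\<And>x. x \<in> {0..L - l} \<Longrightarrow> f x = p1"
    and f_p2: "\<And>x. x \<in> {L..1 - l} \<Longrightarrow> f x = p2"
    and f_int: "integral {0..1} (\<lambda>x. G' (f x)) = 0"
    and V_def: "V = (\<lambda>x. - f' x - G (f x))"
    and theta0_def: "\<theta>0 = integral {0..1} f"
    and G''p1: "G'' p1 < 0" and G''p2: "G'' p2 \<ge> 0"
    and Gcond: "G'' p1 * G' p2 * exp (- K1) < G'' p2 * G' p1 * exp K1"
    and ell_pos: "0 < l" and ell_lt: "l < min L (1 - L)"
    and ell_cond: "(L - l) * G'' p1 * exp (- K1)
                   + ((1 - L - l) * G'' p2 + 2 * l * K2) * exp K1 < 0"
  shows "\<forall>\<^sub>F c in at_right 0.
           I_one G G' V (\<theta>0 + c) < 0 \<and> 0 < I_one G G' V (\<theta>0 - c)"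
proof -
  have G'_cont: "continuous_on UNIV G'" by (rule DERIV_continuous_on[OF G'_deriv])
  have "f x \<in> {p1..p2}" for x using f_bounds by simp
  then have G'_le: "\<bar>G' (f x)\<bar> \<le> K1" and G''_le: "\<bar>G'' (f x)\<bar> \<le> K2" for x
    unfolding K1_def K2_def by (auto intro: abs_le_SUP_Icc[OF G'_cont] abs_le_SUP_Icc[OF G''_cont])
  have f'_cont: "continuous_on UNIV f'" using f'_lip lipschitz_on_continuous_on by blast
  interpret periodic_perturbation G G' G'' f f' K1
    by unfold_locales (fact G_deriv G'_deriv G''_cont f_per f_deriv f'_cont f_int G'_le)+
  have "integral {0..1} (\<lambda>x. G'' (f x) * exp (- \<Phi> x))
      \<le> (L - l) * G'' p1 * exp (- K1) + ((1 - L - l) * G'' p2 + 2 * l * K2) * exp K1"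
    using G''p1 G''p2 f_p1 f_p2 ell_pos ell_lt G''_le exp_\<Phi>_bounds(3,4)
    by (intro integral_two_level_le continuous_on_compose2[OF G''_cont] cont_periodicD(1)[OF cont_periodic_f]
        cont_periodicD(1)[OF cont_periodic_exp_\<Phi>(2)]) auto
  then have "integral {0..1} (\<lambda>x. G'' (f x) * w x) < 0"
    using ell_cond by (intro integral_mult_w_neg) linarith
  from DERIV_neg_dec_right[OF I_one_has_real_derivative this] DERIV_neg_dec_left[OF I_one_has_real_derivative this]
  obtain d1 d2 where "0 < d1" "0 < d2"
    and "\<And>h. 0 < h \<Longrightarrow> h < d1 \<Longrightarrow> I_one G G' V (\<theta>0 + h) < 0"
    and "\<And>h. 0 < h \<Longrightarrow> h < d2 \<Longrightarrow> 0 < I_one G G' V (\<theta>0 - h)"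
    unfolding V_def theta0_def using I_one_base by auto
  then show ?thesis unfolding eventually_at_right_field by (intro exI[of _ "min d1 d2"]) auto
qed

end
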